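(* Let $L$ be a sharp C-lattice and let $m\in L$ be a maximal element. Then there is no $x\in L$ with $m^2<x<m$.
   Context: A multiplicative lattice is a complete lattice $(L,\le)$ with bottom $0$ and top $1$ which is also a commutative monoid with identity $1$ such that $a(\bigvee_\alpha b_\alpha)=\bigvee_\alpha(ab_\alpha)$ for all $a,b_\alpha\in L$. An element $c$ is compact if $c\le\bigvee S$ implies $c\le\bigvee T$ for some finite $T\subseteq S$. A C-lattice is a multiplicative lattice in which $1$ is compact, the product of two compact elements is compact, and every element is a join of compact elements. A maximal element is a maximal element of $L\setminus\{1\}$. $L$ is sharp if whenever $a_1a_2\le b$ with $a_1,a_2,b\in L$, there exist $b_1,b_2\in L$ with $a_i\le b_i$ ($i=1,2$) and $b=b_1b_2$. *)

theory Defs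
  imports Main
begin

definition multiplicative_lattice :: "'a::{complete_lattice, comm_monoid_mult} itself \<Rightarrow> bool" where
  "multiplicative_lattice _ \<longleftrightarrow>
     (1::'a) = top \<and> (\<forall>(a::'a) B. a * Sup B = Sup ((\<lambda>b. a * b) ` B))"

definition compact_el :: "'a::complete_lattice \<Rightarrow> bool" where
  "compact_el c \<longleftrightarrow> (\<forall>S. c \<le> Sup S \<longrightarrow> (\<exists>T. T \<subseteq> S \<and> finite T \<and> c \<le> Sup T))"

definition C_lattice :: "'a::{complete_lattice, comm_monoid_mult} itself \<Rightarrow> bool" where
  "C_lattice t \<longleftrightarrow> multiplicative_lattice t \<and>
     compact_el (1::'a) \<and>
     (\<forall>a b::'a. compact_el a \<longrightarrow> compact_el b \<longrightarrow> compact_el (a * b)) \<and>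
     (\<forall>x::'a. x = Sup {c. compact_el c \<and> c \<le> x})"

definition maximal_el :: "'a::complete_lattice \<Rightarrow> bool" where
  "maximal_el m \<longleftrightarrow> m \<noteq> top \<and> (\<forall>x. m \<le> x \<longrightarrow> x = m \<or> x = top)"

definition sharp :: "'a::{complete_lattice, comm_monoid_mult} itself \<Rightarrow> bool" where
  "sharp _ \<longleftrightarrow> (\<forall>a1 a2 b::'a. a1 * a2 \<le> b \<longrightarrow>
      (\<exists>b1 b2. a1 \<le> b1 \<and> a2 \<le> b2 \<and> b = b1 * b2))"

end

theory Submission
  imports Defs
begin

text \<open>If \<open>m\<^sup>2 \<le> x\<close>, sharpness writes \<open>x = b\<^sub>1 b\<^sub>2\<close> with \<open>m \<le> b\<^sub>i\<close>; by maximality each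
\<open>b\<^sub>i\<close> is \<open>m\<close> or \<open>1\<close>, so \<open>x\<close> is one of \<open>m\<^sup>2\<close>, \<open>m\<close>, \<open>1\<close>.\<close>

lemma multiplicative_lattice_one_eq_top:
  assumes "multiplicative_lattice TYPE('a::{complete_lattice, comm_monoid_mult})"
  shows "(1::'a) = top"
  using assms unfolding multiplicative_lattice_def by blast

lemma C_lattice_one_eq_top:
  assumes "C_lattice TYPE('a::{complete_lattice, comm_monoid_mult})"
  shows "(1::'a) = top"
  using assms unfolding C_lattice_def by (blast intro: multiplicative_lattice_one_eq_top)

lemma maximal_el_le_cases:
  assumes "maximal_el m" and "m \<le> y"
  shows "y = m \<or> y = top"
  using assms unfolding maximal_el_def by blast

lemma sharp_above_square_of_maximal:
  fixes m x :: "'a::{complete_lattice, comm_monoid_mult}"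
  assumes sharp: "sharp TYPE('a)" and one_top: "(1::'a) = top"
    and max: "maximal_el m" and le: "m * m \<le> x"
  shows "x = m * m \<or> x = m \<or> x = top"
proof -
  obtain b1 b2 where "m \<le> b1" "m \<le> b2" and x: "x = b1 * b2"
    using sharp le unfolding sharp_def by blast
  then have "b1 = m \<or> b1 = 1" "b2 = m \<or> b2 = 1"
    using maximal_el_le_cases[OF max] one_top by auto
  with x show ?thesis
    using one_top by auto
qed

theorem proposition2p2:
  fixes m :: "'a::{complete_lattice, comm_monoid_mult}"
  assumes "C_lattice TYPE('a)"
    and "sharp TYPE('a)"
    and "maximal_el m"
  shows "\<not> (\<exists>x. m * m < x \<and> x < m)"
proof
  assume "\<exists>x. m * m < x \<and> x < m"
  then obtain x where lower: "m * m < x" and upper: "x < m"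
    by blast
  have "x = m * m \<or> x = m \<or> x = top"
    using sharp_above_square_of_maximal[OF assms(2) C_lattice_one_eq_top[OF assms(1)] assms(3)]
      lower by simp
  with lower upper show False
    using top_greatest[of m] by auto
qed

end
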